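(* The function \[ \psi_1(z):=\rho z^2+\int_{(0,\infty)}(e^{-yz}-1+yz)\Big(\pi(dy)-\frac{\eta\,dy}{\Gamma(-1-\beta)y^{2+\beta}}\Big),\qquad z\ge0, \] can be uniquely extended to a complex-valued continuous function on $\mathbb C_+:=\{z\in\mathbb C:\mathrm{Re}\,z\ge0\}$ which is holomorphic on $\{z:\mathrm{Re}\,z>0\}$. Moreover, for all $\delta>0$ small enough there exists $C>0$ such that $|\psi_1(z)|\le C|z|^{1+\beta+\delta}+C|z|^2$ for all $z\in\mathbb C_+$.
   Context: Let $\rho\ge0$ and let $\pi$ be a measure on $(0,\infty)$ with $\int_{(0,\infty)}(y\wedge y^2)\pi(dy)<\infty$. Assume there exist $\eta>0$, $\beta\in(0,1)$ and $\delta>0$ with $\int_{(1,\infty)}y^{1+\beta+\delta}\big|\pi(dy)-\frac{\eta\,dy}{\Gamma(-1-\beta)y^{2+\beta}}\big|<\infty$, where $|\cdot|$ is total variation of a signed measure and $\Gamma$ is the analytically continued Gamma function; $\eta,\beta$ are these constants. (Note $\psi_1(z)=\psi(z)+\alpha z-\eta z^{1+\beta}$ for $\psi(z)=-\alpha z+\rho z^2+\int(e^{-zy}-1+zy)\pi(dy)$.) *)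

theory Defs
  imports "HOL-Analysis.Analysis"
begin

definition nu :: "real \<Rightarrow> real \<Rightarrow> real measure" where
  "nu \<eta> \<beta> = density lborel
     (\<lambda>y. ennreal (indicator {0<..} y * \<eta> / (Gamma (-1 - \<beta>) * y powr (2 + \<beta>))))"

definition tv_diff :: "'a measure \<Rightarrow> 'a measure \<Rightarrow> 'a measure" where
  "tv_diff M N = measure_of (space M) (sets M)
     (\<lambda>A. SUP P \<in> {P. finite P \<and> P \<subseteq> sets M \<and> disjoint P \<and> \<Union>P = A}.
            (\<Sum>B\<in>P. ennreal \<bar>measure M B - measure N B\<bar>))"

definition psi1 :: "real \<Rightarrow> real measure \<Rightarrow> real \<Rightarrow> real \<Rightarrow> real \<Rightarrow> real" where
  "psi1 \<rho> \<pi> \<eta> \<beta> z = \<rho> * z^2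
     + (LINT y:{0<..}|\<pi>. exp (- y * z) - 1 + y * z)
     - (LINT y:{0<..}|nu \<eta> \<beta>. exp (- y * z) - 1 + y * z)"

end

(*
  Write psi_1(z) = rho z^2 + Phi_pi(z) - Phi_nu(z), where Phi_M(z) is the integral of the kernel
  e^(-yz) - 1 + yz against M(dy) over (0,inf). For Re z, Re w >= 0 the first-order Taylor remainder
  of the kernel at z is bounded by y min(2, y|w - z|) |w - z|, and y min(2, yh) <= (2 + h) min(y, y^2).
  So, by dominated convergence, Phi_M is complex differentiable within the closed half-plane at each
  of its points: it is continuous there and holomorphic inside. Two such extensions agree on the open
  half-plane by the identity theorem, hence on its closure.

  For the growth bound split the integral at y = 1. On (0,1] the kernel is at most |z|^2 y^2, which
  gives O(|z|^2). On (1,inf) it is at most 2 |z|^s y^(1+beta+delta) for s = 1 + beta + d in [1,2];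
  writing pi and nu restricted to (1,inf) as densities p, q with respect to a common finite measure,
  their total variation is the density |p - q|, and the difference of the two tail integrals is at
  most 2 |z|^s times the integral of y^(1+beta+delta) against it.
*)

theory Submission
  imports Defs "HOL-Complex_Analysis.Complex_Analysis"
begin

section \<open>Estimates for the kernel e^(-yz) - 1 + yz\<close>

lemma norm_exp_minus_diff_le:
  fixes a b :: complex
  assumes "Re a \<ge> 0" "Re b \<ge> 0"
  shows "norm (exp (-a) - exp (-b)) \<le> min 2 (norm (a - b))"
proof -
  have "norm (exp (-a) - exp (-b)) \<le> 1 * norm (a - b)"
  proof (rule field_differentiable_bound[where S="{z. Re z \<ge> 0}" and f'="\<lambda>z. - exp (-z)"])
    fix z assume "z \<in> {z. Re z \<ge> 0}"
    then show "norm (- exp (-z)) \<le> 1"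
      by (simp add: norm_exp_eq_Re)
    show "((\<lambda>z. exp (-z)) has_field_derivative - exp (-z)) (at z within {z. Re z \<ge> 0})"
      by (auto intro!: derivative_eq_intros)
  qed (use assms convex_halfspace_Re_ge in auto)
  moreover have "norm (exp (-a) - exp (-b)) \<le> norm (exp (-a)) + norm (exp (-b))"
    by (rule norm_triangle_ineq4)
  moreover have "norm (exp (-a)) \<le> 1" "norm (exp (-b)) \<le> 1"
    using assms by (auto simp: norm_exp_eq_Re)
  ultimately show ?thesis
    by linarith
qed

definition levy_kernel :: "real \<Rightarrow> complex \<Rightarrow> complex" where
  "levy_kernel y z = exp (- (of_real y * z)) - 1 + of_real y * z"

definition levy_kernel_deriv :: "real \<Rightarrow> complex \<Rightarrow> complex" where
  "levy_kernel_deriv y z = of_real y * (1 - exp (- (of_real y * z)))"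

lemma levy_kernel_has_field_derivative:
  "(levy_kernel y has_field_derivative levy_kernel_deriv y z) (at z within S)"
  unfolding levy_kernel_def levy_kernel_deriv_def
  by (auto intro!: derivative_eq_intros simp: algebra_simps)

lemma levy_kernel_deriv_diff_le:
  assumes "y \<ge> 0" "Re z \<ge> 0" "Re w \<ge> 0"
  shows "norm (levy_kernel_deriv y w - levy_kernel_deriv y z) \<le> y * min 2 (y * norm (w - z))"
proof -
  have "levy_kernel_deriv y w - levy_kernel_deriv y z
      = of_real y * (exp (- (of_real y * z)) - exp (- (of_real y * w)))"
    by (simp add: levy_kernel_deriv_def algebra_simps)
  moreover have "norm (exp (- (of_real y * z)) - exp (- (of_real y * w)))
      \<le> min 2 (norm (of_real y * z - of_real y * w))"
    using assms by (intro norm_exp_minus_diff_le) auto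
  moreover have "norm (of_real y * z - of_real y * w) = y * norm (w - z)"
    using assms by (simp add: norm_mult norm_minus_commute flip: right_diff_distrib)
  ultimately show ?thesis
    using assms by (simp add: norm_mult mult_left_mono)
qed

lemma levy_kernel_remainder_le:
  assumes "y \<ge> 0" "Re z \<ge> 0" "Re w \<ge> 0"
  shows "norm (levy_kernel y w - levy_kernel y z - levy_kernel_deriv y z * (w - z))
    \<le> y * min 2 (y * norm (w - z)) * norm (w - z)"
proof -
  let ?f = "\<lambda>t. levy_kernel y t - levy_kernel_deriv y z * t"
  have "norm (?f w - ?f z) \<le> y * min 2 (y * norm (w - z)) * norm (w - z)"
  proof (rule field_differentiable_bound[where S="closed_segment z w"
        and f'="\<lambda>t. levy_kernel_deriv y t - levy_kernel_deriv y z"])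
    fix t assume t: "t \<in> closed_segment z w"
    show "(?f has_field_derivative levy_kernel_deriv y t - levy_kernel_deriv y z)
        (at t within closed_segment z w)"
      by (auto intro!: derivative_eq_intros levy_kernel_has_field_derivative)
    have "closed_segment z w \<subseteq> {z. Re z \<ge> 0}"
      using assms by (intro closed_segment_subset convex_halfspace_Re_ge) auto
    then have "norm (levy_kernel_deriv y t - levy_kernel_deriv y z) \<le> y * min 2 (y * norm (t - z))"
      using t assms by (intro levy_kernel_deriv_diff_le) auto
    also have "\<dots> \<le> y * min 2 (y * norm (w - z))"
      using t assms dist_in_closed_segment[of t z w]
      by (intro mult_left_mono min.mono) (auto simp: dist_norm norm_minus_commute)
    finally show "norm (levy_kernel_deriv y t - levy_kernel_deriv y z) \<le> y * min 2 (y * norm (w - z))" .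
  qed auto
  then show ?thesis
    by (simp add: algebra_simps)
qed

lemma norm_levy_kernel_le:
  "y \<ge> 0 \<Longrightarrow> Re z \<ge> 0 \<Longrightarrow> norm (levy_kernel y z) \<le> y * min 2 (y * norm z) * norm z"
  using levy_kernel_remainder_le[of y 0 z] by (simp add: levy_kernel_def levy_kernel_deriv_def)

lemma norm_levy_kernel_deriv_le:
  "y \<ge> 0 \<Longrightarrow> Re z \<ge> 0 \<Longrightarrow> norm (levy_kernel_deriv y z) \<le> y * min 2 (y * norm z)"
  using levy_kernel_deriv_diff_le[of y 0 z] by (simp add: levy_kernel_deriv_def)

definition lin_sq_min :: "real \<Rightarrow> real" where
  "lin_sq_min y = min y (y\<^sup>2)"

lemma lin_sq_min_nonneg: "y \<ge> 0 \<Longrightarrow> lin_sq_min y \<ge> 0"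
  by (simp add: lin_sq_min_def)

lemma lin_sq_min_eq_sq: "0 \<le> y \<Longrightarrow> y \<le> 1 \<Longrightarrow> lin_sq_min y = y\<^sup>2"
  by (simp add: lin_sq_min_def power2_eq_square mult_left_le_one_le min_absorb2)

lemma lin_sq_min_eq_self: "1 < y \<Longrightarrow> lin_sq_min y = y"
  by (simp add: lin_sq_min_def power2_eq_square)

lemma mult_min_le_lin_sq_min:
  assumes "0 \<le> y" "0 \<le> R"
  shows "y * min 2 (y * R) \<le> (2 + R) * lin_sq_min y"
proof (cases "y \<le> 1")
  case True
  have "y * min 2 (y * R) \<le> y * (y * R)"
    using assms by (intro mult_left_mono) auto
  also have "\<dots> \<le> (2 + R) * y\<^sup>2"
    using assms by (simp add: power2_eq_square algebra_simps)
  finally show ?thesis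
    using True assms by (simp add: lin_sq_min_eq_sq)
next
  case False
  have "y * min 2 (y * R) \<le> y * 2"
    using assms by (intro mult_left_mono) auto
  also have "\<dots> \<le> (2 + R) * y"
    using assms by (simp add: algebra_simps)
  finally show ?thesis
    using False by (simp add: lin_sq_min_eq_self)
qed

lemma norm_levy_kernel_le_lin_sq_min:
  assumes "y \<ge> 0" "Re z \<ge> 0"
  shows "norm (levy_kernel y z) \<le> (2 + norm z) * norm z * lin_sq_min y"
proof -
  have "norm (levy_kernel y z) \<le> y * min 2 (y * norm z) * norm z"
    using assms by (rule norm_levy_kernel_le)
  also have "\<dots> \<le> (2 + norm z) * lin_sq_min y * norm z"
    using assms by (intro mult_right_mono mult_min_le_lin_sq_min) auto
  finally show ?thesis
    by (simp add: algebra_simps)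
qed

lemma min_mult_le_powr:
  fixes a s :: real
  assumes "0 \<le> a" "1 \<le> s" "s \<le> 2"
  shows "min 2 a * a \<le> 2 * a powr s"
proof (cases "a \<le> 1")
  case True
  have "min 2 a * a \<le> a powr 2"
    using assms by (simp add: powr_numeral power2_eq_square mult_right_mono)
  also have "\<dots> \<le> a powr s"
    using True assms by (intro powr_mono') auto
  finally show ?thesis
    using assms by (smt (verit) powr_ge_zero)
next
  case False
  then have "min 2 a * a \<le> 2 * a powr 1"
    by simp
  also have "\<dots> \<le> 2 * a powr s"
    using False assms by (intro mult_left_mono powr_mono) auto
  finally show ?thesis .
qed

lemma norm_levy_kernel_le_sq:
  "y \<ge> 0 \<Longrightarrow> Re z \<ge> 0 \<Longrightarrow> norm (levy_kernel y z) \<le> norm z ^ 2 * y\<^sup>2"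
  using norm_levy_kernel_le[of y z] mult_right_mono[OF min.cobounded2[of 2 "y * norm z"], of "y * norm z"]
  by (simp add: power2_eq_square mult_ac)

lemma norm_levy_kernel_le_powr:
  assumes "1 \<le> y" "Re z \<ge> 0" "1 \<le> s" "s \<le> 2" "s \<le> e"
  shows "norm (levy_kernel y z) \<le> 2 * norm z powr s * y powr e"
proof -
  have "norm (levy_kernel y z) \<le> min 2 (y * norm z) * (y * norm z)"
    using norm_levy_kernel_le[of y z] assms by (simp add: mult_ac)
  also have "\<dots> \<le> 2 * (y * norm z) powr s"
    using assms by (intro min_mult_le_powr) auto
  also have "\<dots> = 2 * norm z powr s * y powr s"
    using assms by (simp add: powr_mult)
  also have "\<dots> \<le> 2 * norm z powr s * y powr e"
    using assms by (intro mult_left_mono powr_mono) auto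
  finally show ?thesis .
qed

section \<open>Integrals against Levy measures\<close>

lemma has_field_derivative_by_remainder_bound:
  fixes F :: "'a::real_normed_field \<Rightarrow> 'a"
  assumes bound: "\<And>w. w \<in> S \<Longrightarrow> norm (F w - F z - D * (w - z)) \<le> r (norm (w - z)) * norm (w - z)"
    and r: "(r \<longlongrightarrow> 0) (at_right 0)"
  shows "(F has_field_derivative D) (at z within S)"
proof -
  have "filterlim (\<lambda>w. norm (w - z)) (at_right 0) (at z within S)"
    unfolding filterlim_at
    by (auto simp: eventually_at_filter intro!: tendsto_eq_intros)
  with r have "((\<lambda>w. r (norm (w - z))) \<longlongrightarrow> 0) (at z within S)"
    by (rule filterlim_compose)
  moreover have "\<forall>\<^sub>F w in at z within S. norm ((F w - F z) / (w - z) - D) \<le> r (norm (w - z))"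
    unfolding eventually_at_filter
  proof (intro always_eventually allI impI)
    fix w assume "w \<noteq> z" "w \<in> S"
    then have "norm ((F w - F z) / (w - z) - D) = norm (F w - F z - D * (w - z)) / norm (w - z)"
      by (simp add: field_simps flip: norm_divide)
    also have "\<dots> \<le> r (norm (w - z))"
      using bound[OF \<open>w \<in> S\<close>] \<open>w \<noteq> z\<close> by (simp add: divide_le_eq)
    finally show "norm ((F w - F z) / (w - z) - D) \<le> r (norm (w - z))" .
  qed
  ultimately have "((\<lambda>w. (F w - F z) / (w - z) - D) \<longlongrightarrow> 0) (at z within S)"
    by (rule Lim_null_comparison[rotated])
  then show ?thesis
    by (simp add: has_field_derivative_iff LIM_zero_iff)
qed

lemma norm_set_integral_le:
  fixes f :: "'a \<Rightarrow> 'b::{banach, second_countable_topology}"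
  assumes "set_integrable M A f" "set_integrable M A g" "\<And>x. x \<in> A \<Longrightarrow> norm (f x) \<le> g x"
  shows "norm (LINT x:A|M. f x) \<le> (LINT x:A|M. g x)"
proof -
  have "norm (LINT x:A|M. f x) \<le> (LINT x:A|M. norm (f x))"
    using assms(1) by (rule set_integral_norm_bound)
  also have "\<dots> \<le> (LINT x:A|M. g x)"
    using set_integrable_norm[OF assms(1)] assms(2,3) by (rule set_integral_mono)
  finally show ?thesis .
qed

lemma borel_measurable_lin_sq_min [measurable]: "lin_sq_min \<in> borel_measurable borel"
  unfolding lin_sq_min_def by measurable

lemma borel_measurable_levy_kernel [measurable]: "(\<lambda>y. levy_kernel y z) \<in> borel_measurable borel"
  unfolding levy_kernel_def by measurable

lemma borel_measurable_levy_kernel_deriv [measurable]: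
  "(\<lambda>y. levy_kernel_deriv y z) \<in> borel_measurable borel"
  unfolding levy_kernel_deriv_def by measurable

definition levy_integral :: "real measure \<Rightarrow> complex \<Rightarrow> complex" where
  "levy_integral M z = (LINT y:{0<..}|M. levy_kernel y z)"

definition levy_integral_deriv :: "real measure \<Rightarrow> complex \<Rightarrow> complex" where
  "levy_integral_deriv M z = (LINT y:{0<..}|M. levy_kernel_deriv y z)"

locale levy_measure =
  fixes M :: "real measure"
  assumes sets_eq [measurable_cong]: "sets M = sets borel"
    and integrable_lin_sq_min: "integrable M (\<lambda>y. indicator {0<..} y * lin_sq_min y)"
begin

lemma space_eq: "space M = UNIV"
  using sets_eq_imp_space_eq[OF sets_eq] by simp

lemma lin_sq_min_dominated:
  fixes g :: "real \<Rightarrow> 'b::{banach, second_countable_topology}"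
  assumes "A \<subseteq> {0<..}" "A \<in> sets borel" "g \<in> borel_measurable borel" "0 \<le> C"
    and "\<And>y. y \<in> A \<Longrightarrow> norm (g y) \<le> C * lin_sq_min y"
  shows "set_integrable M A g"
    and "norm (LINT y:A|M. g y) \<le> C * (LINT y|M. indicator {0<..} y * lin_sq_min y)"
proof -
  have bound: "norm (indicator A y *\<^sub>R g y) \<le> C * (indicator {0<..} y * lin_sq_min y)" for y
    using assms(5)[of y] assms(1,4) lin_sq_min_nonneg[of y] by (auto simp: indicator_def)
  have int: "integrable M (\<lambda>y. C * (indicator {0<..} y * lin_sq_min y))"
    using integrable_lin_sq_min by simp
  show "set_integrable M A g"
    unfolding set_integrable_def
  proof (rule Bochner_Integration.integrable_bound[OF int])
    show "(\<lambda>y. indicator A y *\<^sub>R g y) \<in> borel_measurable M"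
      using assms(2,3) by measurable
    show "AE y in M. norm (indicator A y *\<^sub>R g y) \<le> norm (C * (indicator {0<..} y * lin_sq_min y))"
      by (intro AE_I2) (metis bound abs_ge_self order_trans real_norm_def)
  qed
  then have "norm (LINT y:A|M. g y) \<le> (LINT y|M. C * (indicator {0<..} y * lin_sq_min y))"
    unfolding set_lebesgue_integral_def set_integrable_def
    using int bound by (rule Bochner_Integration.integral_norm_bound_integral)
  then show "norm (LINT y:A|M. g y) \<le> C * (LINT y|M. indicator {0<..} y * lin_sq_min y)"
    by simp
qed

lemma set_integrable_levy_kernel: "Re z \<ge> 0 \<Longrightarrow> set_integrable M {0<..} (\<lambda>y. levy_kernel y z)"
  by (rule lin_sq_min_dominated(1)[where C="(2 + norm z) * norm z"])
    (auto simp: norm_levy_kernel_le_lin_sq_min)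

lemma set_integrable_levy_kernel_deriv:
  "Re z \<ge> 0 \<Longrightarrow> set_integrable M {0<..} (\<lambda>y. levy_kernel_deriv y z)"
  by (rule lin_sq_min_dominated(1)[where C="2 + norm z"])
    (auto intro: order_trans[OF norm_levy_kernel_deriv_le mult_min_le_lin_sq_min])

lemma set_integrable_remainder_weight:
  "h \<ge> 0 \<Longrightarrow> set_integrable M {0<..} (\<lambda>y. y * min 2 (y * h))"
  by (rule lin_sq_min_dominated(1)[where C="2 + h"]) (auto intro: mult_min_le_lin_sq_min)

lemma remainder_weight_tendsto_0:
  "((\<lambda>h. LINT y:{0<..}|M. y * min 2 (y * h)) \<longlongrightarrow> 0) (at_right 0)"
  unfolding filterlim_at_right_to_top set_lebesgue_integral_def
proof -
  let ?s = "\<lambda>t y. indicator {0<..} y *\<^sub>R (y * min 2 (y * inverse t))"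
  have "((\<lambda>t. integral\<^sup>L M (?s t)) \<longlongrightarrow> integral\<^sup>L M (\<lambda>y. 0::real)) at_top"
  proof (rule integral_dominated_convergence_at_top[where w="\<lambda>y. 3 * (indicator {0<..} y * lin_sq_min y)"])
    show "integrable M (\<lambda>y. 3 * (indicator {0<..} y * lin_sq_min y))"
      using integrable_lin_sq_min by simp
    have "((\<lambda>t. ?s t y) \<longlongrightarrow> indicator {0<..} y *\<^sub>R (y * min 2 (y * 0))) at_top" for y :: real
      by (intro tendsto_intros tendsto_inverse_0_at_top filterlim_ident)
    then show "AE y in M. ((\<lambda>t. ?s t y) \<longlongrightarrow> 0) at_top"
      by simp
    show "\<forall>\<^sub>F t in at_top. AE y in M. norm (?s t y) \<le> 3 * (indicator {0<..} y * lin_sq_min y)"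
      using eventually_ge_at_top[of "1::real"]
    proof eventually_elim
      case (elim t)
      then have "inverse t \<le> 1" "inverse t \<ge> 0"
        by (auto simp: inverse_le_1_iff)
      have "y * min 2 (y * inverse t) \<le> 3 * lin_sq_min y" if "y > 0" for y
      proof -
        have "y * min 2 (y * inverse t) \<le> (2 + inverse t) * lin_sq_min y"
          using that \<open>inverse t \<ge> 0\<close> by (intro mult_min_le_lin_sq_min) auto
        also have "\<dots> \<le> 3 * lin_sq_min y"
          using that \<open>inverse t \<le> 1\<close> by (intro mult_right_mono lin_sq_min_nonneg) auto
        finally show ?thesis .
      qed
      then show ?case
        using \<open>inverse t \<ge> 0\<close> by (intro AE_I2) (auto simp: indicator_def abs_of_nonneg)
    qed
  qed auto
  then show "((\<lambda>t. integral\<^sup>L M (?s t)) \<longlongrightarrow> 0) at_top"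
    by simp
qed

lemma levy_integral_has_field_derivative:
  assumes z: "Re z \<ge> 0"
  shows "(levy_integral M has_field_derivative levy_integral_deriv M z) (at z within {z. Re z \<ge> 0})"
proof (rule has_field_derivative_by_remainder_bound[OF _ remainder_weight_tendsto_0])
  fix w assume w: "w \<in> {z. Re z \<ge> 0}"
  let ?h = "norm (w - z)"
  have "levy_integral M w - levy_integral M z - levy_integral_deriv M z * (w - z)
      = (LINT y:{0<..}|M. levy_kernel y w - levy_kernel y z - levy_kernel_deriv y z * (w - z))"
    using set_integrable_levy_kernel w z set_integrable_levy_kernel_deriv[OF z]
    by (simp add: levy_integral_def levy_integral_deriv_def set_integral_diff)
  also have "norm \<dots> \<le> (LINT y:{0<..}|M. y * min 2 (y * ?h) * ?h)"
    using set_integrable_levy_kernel w z set_integrable_levy_kernel_deriv[OF z]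
      set_integrable_remainder_weight[of ?h]
    by (intro norm_set_integral_le levy_kernel_remainder_le) auto
  also have "\<dots> = (LINT y:{0<..}|M. y * min 2 (y * ?h)) * ?h"
    by simp
  finally show "norm (levy_integral M w - levy_integral M z - levy_integral_deriv M z * (w - z))
      \<le> (LINT y:{0<..}|M. y * min 2 (y * ?h)) * ?h" .
qed

lemma continuous_on_levy_integral: "continuous_on {z. Re z \<ge> 0} (levy_integral M)"
  by (rule DERIV_continuous_on[OF levy_integral_has_field_derivative]) simp

lemma holomorphic_on_levy_integral: "levy_integral M holomorphic_on {z. Re z > 0}"
proof -
  have "(levy_integral M has_field_derivative levy_integral_deriv M z) (at z)" if "Re z > 0" for z
  proof -
    have "at z within {z. Re z \<ge> 0} = at z"
      using that by (intro at_within_open_subset[OF _ open_halfspace_Re_gt]) auto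
    then show ?thesis
      using levy_integral_has_field_derivative[of z] that by simp
  qed
  then show ?thesis
    using holomorphic_on_open[OF open_halfspace_Re_gt] by blast
qed

lemma levy_integral_split:
  assumes z: "Re z \<ge> 0"
  shows "levy_integral M z = (LINT y:{0<..1}|M. levy_kernel y z)
      + integral\<^sup>L (restrict_space M {1<..}) (\<lambda>y. levy_kernel y z)"
    and "integrable (restrict_space M {1<..}) (\<lambda>y. levy_kernel y z)"
proof -
  note int = set_integrable_levy_kernel[OF z]
  have small: "set_integrable M {0<..1} (\<lambda>y. levy_kernel y z)"
    and large: "set_integrable M {1<..} (\<lambda>y. levy_kernel y z)"
    by (auto intro: set_integrable_subset[OF int] simp: sets_eq)
  have "(LINT y:{0<..1} \<union> {1<..}|M. levy_kernel y z)
      = (LINT y:{0<..1}|M. levy_kernel y z) + (LINT y:{1<..}|M. levy_kernel y z)"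
    by (rule set_integral_Un[OF _ small large]) auto
  moreover have "{0<..1} \<union> {1<..} = {0::real<..}"
    by auto
  ultimately have "levy_integral M z
      = (LINT y:{0<..1}|M. levy_kernel y z) + (LINT y:{1<..}|M. levy_kernel y z)"
    by (simp add: levy_integral_def)
  with large show "levy_integral M z = (LINT y:{0<..1}|M. levy_kernel y z)
      + integral\<^sup>L (restrict_space M {1<..}) (\<lambda>y. levy_kernel y z)"
    and "integrable (restrict_space M {1<..}) (\<lambda>y. levy_kernel y z)"
    by (simp_all add: integral_restrict_space integrable_restrict_space space_eq sets_eq
        set_lebesgue_integral_def set_integrable_def)
qed

lemma norm_small_jumps_le:
  assumes z: "Re z \<ge> 0"
  shows "norm (LINT y:{0<..1}|M. levy_kernel y z)
    \<le> norm z ^ 2 * (LINT y|M. indicator {0<..} y * lin_sq_min y)"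
proof (rule lin_sq_min_dominated(2))
  fix y :: real assume "y \<in> {0<..1}"
  then show "norm (levy_kernel y z) \<le> norm z ^ 2 * lin_sq_min y"
    using norm_levy_kernel_le_sq[of y z] z by (simp add: lin_sq_min_eq_sq)
next
  show "{0<..1} \<subseteq> {0::real<..}"
    by auto
qed simp_all

lemma finite_measure_large_jumps: "finite_measure (restrict_space M {1<..})"
proof (rule finite_measureI)
  have "emeasure M {1<..} = (\<integral>\<^sup>+y. indicator {1<..} y \<partial>M)"
    by (simp add: sets_eq)
  also have "\<dots> \<le> (\<integral>\<^sup>+y. ennreal (indicator {0<..} y * lin_sq_min y) \<partial>M)"
    by (intro nn_integral_mono) (auto simp: indicator_def lin_sq_min_eq_self)
  also have "\<dots> = ennreal (LINT y|M. indicator {0<..} y * lin_sq_min y)"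
    using integrable_lin_sq_min
    by (intro nn_integral_eq_integral AE_I2) (auto simp: indicator_def lin_sq_min_nonneg)
  also have "\<dots> < \<infinity>"
    by simp
  finally show "emeasure (restrict_space M {1<..}) (space (restrict_space M {1<..})) \<noteq> \<infinity>"
    by (simp add: emeasure_restrict_space space_restrict_space space_eq sets_eq)
qed

end

lemma levy_measureI:
  assumes "sets M = sets borel" "(\<integral>\<^sup>+y\<in>{0<..}. ennreal (min y (y\<^sup>2)) \<partial>M) < \<infinity>"
  shows "levy_measure M"
proof
  show "integrable M (\<lambda>y. indicator {0<..} y * lin_sq_min y)"
  proof (rule integrableI_nonneg)
    show "(\<lambda>y. indicator {0<..} y * lin_sq_min y) \<in> borel_measurable M"
      using assms(1) by measurable
    have "(\<integral>\<^sup>+y. ennreal (indicator {0<..} y * lin_sq_min y) \<partial>M) = (\<integral>\<^sup>+y\<in>{0<..}. ennreal (min y (y\<^sup>2)) \<partial>M)"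
      by (intro nn_integral_cong) (auto simp: indicator_def lin_sq_min_def)
    with assms(2) show "(\<integral>\<^sup>+y. ennreal (indicator {0<..} y * lin_sq_min y) \<partial>M) < \<infinity>"
      by simp
  qed (auto simp: indicator_def lin_sq_min_def)
qed fact

lemma levy_integral_of_real:
  "levy_integral M (of_real x) = of_real (LINT y:{0<..}|M. exp (- y * x) - 1 + y * x)"
  unfolding levy_integral_def levy_kernel_def
  by (simp flip: set_integral_complex_of_real exp_of_real)

section \<open>Total variation of the difference of two finite measures\<close>

lemma emeasure_density_eq_set_integral:
  fixes f :: "'a \<Rightarrow> real"
  assumes "integrable \<mu> f" "\<And>x. 0 \<le> f x" "B \<in> sets \<mu>"
  shows "emeasure (density \<mu> f) B = ennreal (LINT x:B|\<mu>. f x)"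
proof -
  have "emeasure (density \<mu> f) B = (\<integral>\<^sup>+x\<in>B. f x \<partial>\<mu>)"
    using assms by (simp add: emeasure_density borel_measurable_integrable mult.commute)
  also have "\<dots> = ennreal (LINT x:B|\<mu>. f x)"
    using assms by (intro nn_set_integral_eq_set_integral) auto
  finally show ?thesis .
qed

lemma measure_density_eq_set_integral:
  fixes f :: "'a \<Rightarrow> real"
  assumes "integrable \<mu> f" "\<And>x. 0 \<le> f x" "B \<in> sets \<mu>"
  shows "measure (density \<mu> f) B = (LINT x:B|\<mu>. f x)"
proof -
  have "0 \<le> (LINT x:B|\<mu>. f x)"
    unfolding set_lebesgue_integral_def using assms(2)
    by (intro Bochner_Integration.integral_nonneg) (simp add: indicator_def)
  then show ?thesis
    using emeasure_density_eq_set_integral[OF assms] by (simp add: measure_def)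
qed

lemma abs_measure_density_diff:
  fixes p q :: "'a \<Rightarrow> real"
  assumes p: "integrable \<mu> p" "\<And>x. 0 \<le> p x" and q: "integrable \<mu> q" "\<And>x. 0 \<le> q x"
    and B: "B \<in> sets \<mu>"
  shows "ennreal \<bar>measure (density \<mu> p) B - measure (density \<mu> q) B\<bar>
      \<le> emeasure (density \<mu> (\<lambda>x. \<bar>p x - q x\<bar>)) B"
    and "(\<forall>x\<in>B. q x \<le> p x) \<or> (\<forall>x\<in>B. p x \<le> q x) \<Longrightarrow>
      ennreal \<bar>measure (density \<mu> p) B - measure (density \<mu> q) B\<bar>
      = emeasure (density \<mu> (\<lambda>x. \<bar>p x - q x\<bar>)) B"
proof -
  have set_int: "set_integrable \<mu> B p" "set_integrable \<mu> B q"
    unfolding set_integrable_def by (intro integrable_mult_indicator B p(1) q(1))+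
  have diff: "measure (density \<mu> p) B - measure (density \<mu> q) B = (LINT x:B|\<mu>. p x - q x)"
    using p q B set_int by (simp add: measure_density_eq_set_integral set_integral_diff)
  have abs_diff: "emeasure (density \<mu> (\<lambda>x. \<bar>p x - q x\<bar>)) B = ennreal (LINT x:B|\<mu>. \<bar>p x - q x\<bar>)"
    using p q B by (intro emeasure_density_eq_set_integral) auto
  have "norm (LINT x:B|\<mu>. p x - q x) \<le> (LINT x:B|\<mu>. norm (p x - q x))"
    using set_int by (intro set_integral_norm_bound set_integral_diff(1))
  then show "ennreal \<bar>measure (density \<mu> p) B - measure (density \<mu> q) B\<bar>
      \<le> emeasure (density \<mu> (\<lambda>x. \<bar>p x - q x\<bar>)) B"
    by (simp add: diff abs_diff ennreal_leI)
  show "ennreal \<bar>measure (density \<mu> p) B - measure (density \<mu> q) B\<bar>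
      = emeasure (density \<mu> (\<lambda>x. \<bar>p x - q x\<bar>)) B"
    if sign: "(\<forall>x\<in>B. q x \<le> p x) \<or> (\<forall>x\<in>B. p x \<le> q x)"
  proof -
    have "(LINT x:B|\<mu>. p x - q x) = (LINT x:B|\<mu>. \<bar>p x - q x\<bar>)
        \<or> (LINT x:B|\<mu>. q x - p x) = (LINT x:B|\<mu>. \<bar>p x - q x\<bar>)"
      using sign B by (auto intro!: set_lebesgue_integral_cong)
    moreover have "(LINT x:B|\<mu>. q x - p x) = - (LINT x:B|\<mu>. p x - q x)"
      using set_int by (simp add: set_integral_diff)
    moreover have "0 \<le> (LINT x:B|\<mu>. \<bar>p x - q x\<bar>)"
      unfolding set_lebesgue_integral_def by (intro Bochner_Integration.integral_nonneg) simp
    ultimately show ?thesis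
      by (auto simp: diff abs_diff)
  qed
qed

lemma SUP_partitions_abs_measure_density_diff:
  fixes p q :: "'a \<Rightarrow> real"
  assumes p: "integrable \<mu> p" "\<And>x. 0 \<le> p x" and q: "integrable \<mu> q" "\<And>x. 0 \<le> q x"
    and A: "A \<in> sets \<mu>"
  shows "(SUP \<P> \<in> {\<P>. finite \<P> \<and> \<P> \<subseteq> sets \<mu> \<and> disjoint \<P> \<and> \<Union>\<P> = A}.
      \<Sum>B\<in>\<P>. ennreal \<bar>measure (density \<mu> p) B - measure (density \<mu> q) B\<bar>)
    = emeasure (density \<mu> (\<lambda>x. \<bar>p x - q x\<bar>)) A"
    (is "(SUP \<P> \<in> ?partitions. ?S \<P>) = emeasure ?D A")
proof (rule antisym)
  note abs_diff = abs_measure_density_diff[OF p q]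
  show "(SUP \<P> \<in> ?partitions. ?S \<P>) \<le> emeasure ?D A"
  proof (rule SUP_least)
    fix \<P> assume "\<P> \<in> ?partitions"
    then have \<P>: "finite \<P>" "\<P> \<subseteq> sets \<mu>" "disjoint \<P>" "\<Union>\<P> = A"
      by auto
    then have "?S \<P> \<le> (\<Sum>B\<in>\<P>. emeasure ?D B)"
      by (intro sum_mono abs_diff(1)) auto
    also have "\<dots> = emeasure ?D (\<Union>B\<in>\<P>. id B)"
      using \<P> by (subst sum_emeasure) (auto simp: disjoint_family_on_def disjoint_def)
    also have "\<dots> = emeasure ?D A"
      using \<P> by simp
    finally show "?S \<P> \<le> emeasure ?D A" .
  qed
  show "emeasure ?D A \<le> (SUP \<P> \<in> ?partitions. ?S \<P>)"
  proof (cases "A = {}")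
    case False
    \<comment> \<open>Hahn decomposition of the signed measure with density p - q\<close>
    define H where "H = {x \<in> space \<mu>. q x \<le> p x}"
    have H: "H \<in> sets \<mu>"
      unfolding H_def using p q by (measurable; simp add: borel_measurable_integrable)
    have "A \<inter> H \<noteq> A - H"
      using False by auto
    have "emeasure ?D A = emeasure ?D (A \<inter> H) + emeasure ?D (A - H)"
      using A H by (subst plus_emeasure) (auto simp: Int_Diff_Un)
    also have "\<dots> = ?S {A \<inter> H, A - H}"
    proof -
      have "ennreal \<bar>measure (density \<mu> p) (A \<inter> H) - measure (density \<mu> q) (A \<inter> H)\<bar>
          = emeasure ?D (A \<inter> H)"
        using A H by (intro abs_diff(2)) (auto simp: H_def)
      moreover have "ennreal \<bar>measure (density \<mu> p) (A - H) - measure (density \<mu> q) (A - H)\<bar>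
          = emeasure ?D (A - H)"
        using A H sets.sets_into_space[OF A] by (intro abs_diff(2)) (auto simp: H_def)
      ultimately show ?thesis
        using \<open>A \<inter> H \<noteq> A - H\<close> by simp
    qed
    also have "\<dots> \<le> (SUP \<P> \<in> ?partitions. ?S \<P>)"
      using A H by (intro SUP_upper) (auto simp: disjoint_def)
    finally show ?thesis .
  qed simp
qed

lemma tv_diff_density:
  fixes p q :: "'a \<Rightarrow> real"
  assumes p: "integrable \<mu> p" "\<And>x. 0 \<le> p x" and q: "integrable \<mu> q" "\<And>x. 0 \<le> q x"
  shows "tv_diff (density \<mu> p) (density \<mu> q) = density \<mu> (\<lambda>x. \<bar>p x - q x\<bar>)"
proof -
  let ?D = "density \<mu> (\<lambda>x. \<bar>p x - q x\<bar>)"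
  have "tv_diff (density \<mu> p) (density \<mu> q) = measure_of (space ?D) (sets ?D) (emeasure ?D)"
    unfolding tv_diff_def
    using SUP_partitions_abs_measure_density_diff[OF p q] sets.sigma_sets_eq[of \<mu>] sets.space_closed[of \<mu>]
    by (simp, intro measure_of_eq) auto
  then show ?thesis
    by (simp only: measure_of_of_measure)
qed

lemma finite_measure_sup_measure':
  assumes "finite_measure P" "finite_measure Q" "sets Q = sets P"
  shows "finite_measure (sup_measure' P Q)"
proof (rule finite_measureI)
  have "emeasure (sup_measure' P Q) (space P) \<le> emeasure P (space P) + emeasure Q (space P)"
  proof (subst emeasure_sup_measure'[OF assms(3)], simp, intro SUP_least add_mono)
    fix Y assume "Y \<in> sets P"
    show "emeasure P (space P \<inter> Y) \<le> emeasure P (space P)"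
      by (intro emeasure_mono) auto
    show "emeasure Q (space P \<inter> - Y) \<le> emeasure Q (space P)"
      using assms(3) by (intro emeasure_mono) auto
  qed
  also have "\<dots> < \<infinity>"
    using assms finite_measure.emeasure_finite[of P] finite_measure.emeasure_finite[of Q]
    by (simp add: less_top)
  finally show "emeasure (sup_measure' P Q) (space (sup_measure' P Q)) \<noteq> \<infinity>"
    using assms(3) by simp
qed

lemma (in finite_measure) real_density_if_absolutely_continuous:
  assumes "finite_measure N" "absolutely_continuous M N" "sets N = sets M"
  obtains p :: "'a \<Rightarrow> real" where "integrable M p" "\<And>x. 0 \<le> p x" "N = density M p"
proof -
  obtain p where p: "p \<in> borel_measurable M" "AE x in M. RN_deriv M N x = ennreal (p x)"
    "\<And>x. 0 \<le> p x"
    using real_RN_deriv[OF assms] by blast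
  have N_eq: "N = density M p"
    using density_RN_deriv[OF assms(2,3)] density_cong[OF borel_measurable_RN_deriv _ p(2)] p(1)
    by simp
  have "integrable M p"
  proof (rule integrableI_nonneg)
    have "(\<integral>\<^sup>+x. ennreal (p x) \<partial>M) = emeasure N (space M)"
      using p(1) by (simp add: N_eq emeasure_density)
    also have "\<dots> < \<infinity>"
      using assms(1) by (simp add: finite_measure.emeasure_finite less_top[symmetric])
    finally show "(\<integral>\<^sup>+x. ennreal (p x) \<partial>M) < \<infinity>" .
  qed (use p in auto)
  with p(3) N_eq that show ?thesis
    by blast
qed

lemma finite_measures_common_density:
  assumes "finite_measure P" "finite_measure Q" "sets Q = sets P"
  obtains \<mu> and p q :: "'a \<Rightarrow> real"
  where "sets \<mu> = sets P" "integrable \<mu> p" "integrable \<mu> q" "\<And>x. 0 \<le> p x" "\<And>x. 0 \<le> q x"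
    and "P = density \<mu> p" "Q = density \<mu> q"
proof -
  define \<mu> where "\<mu> = sup_measure' P Q"
  interpret \<mu>: finite_measure \<mu>
    unfolding \<mu>_def using assms by (rule finite_measure_sup_measure')
  have sets_\<mu>: "sets \<mu> = sets P"
    using assms(3) by (simp add: \<mu>_def)
  have ac: "absolutely_continuous \<mu> N"
    if "sets N = sets P" "\<And>A. A \<in> sets P \<Longrightarrow> emeasure N A \<le> emeasure \<mu> A" for N
    unfolding absolutely_continuous_def
  proof
    fix A assume "A \<in> null_sets \<mu>"
    then show "A \<in> null_sets N"
      using that(2)[of A] that(1) sets_\<mu> by (simp add: null_sets_def)
  qed
  have "absolutely_continuous \<mu> P" "absolutely_continuous \<mu> Q"
    using le_emeasure_sup_measure'1[OF assms(3)] le_emeasure_sup_measure'2[OF assms(3)] assms(3)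
    by (intro ac; simp add: \<mu>_def)+
  moreover have "sets P = sets \<mu>" "sets Q = sets \<mu>"
    using assms(3) sets_\<mu> by simp_all
  ultimately obtain p q where "integrable \<mu> p" "\<And>x. 0 \<le> p x" "P = density \<mu> p"
    and "integrable \<mu> q" "\<And>x. 0 \<le> q x" "Q = density \<mu> q"
    using \<mu>.real_density_if_absolutely_continuous assms(1,2) by metis
  with sets_\<mu> that show ?thesis
    by blast
qed

lemma norm_integral_diff_le_tv_diff:
  fixes f :: "'a \<Rightarrow> 'b::{banach, second_countable_topology}" and g :: "'a \<Rightarrow> real"
  assumes "finite_measure P" "finite_measure Q" "sets Q = sets P"
    and f: "integrable P f" "integrable Q f"
    and g: "g \<in> borel_measurable P" "\<And>x. 0 \<le> g x"
    and tv_finite: "(\<integral>\<^sup>+x. g x \<partial>tv_diff P Q) < \<infinity>"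
    and bound: "\<And>x. x \<in> space P \<Longrightarrow> norm (f x) \<le> c * g x"
  shows "norm (integral\<^sup>L P f - integral\<^sup>L Q f) \<le> c * enn2real (\<integral>\<^sup>+x. g x \<partial>tv_diff P Q)"
proof -
  obtain \<mu> and p q :: "'a \<Rightarrow> real"
    where sets_\<mu>: "sets \<mu> = sets P" and p: "integrable \<mu> p" "\<And>x. 0 \<le> p x"
      and q: "integrable \<mu> q" "\<And>x. 0 \<le> q x" and P: "P = density \<mu> p" and Q: "Q = density \<mu> q"
    using finite_measures_common_density[OF assms(1-3)] by metis
  have tv: "tv_diff P Q = density \<mu> (\<lambda>x. \<bar>p x - q x\<bar>)"
    unfolding P Q using p q by (rule tv_diff_density)
  have [measurable]: "p \<in> borel_measurable \<mu>" "q \<in> borel_measurable \<mu>"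
    "f \<in> borel_measurable \<mu>" "g \<in> borel_measurable \<mu>"
    using p q f g sets_\<mu> by (auto dest: borel_measurable_integrable cong: measurable_cong_sets)
  have space_\<mu>: "space \<mu> = space P"
    using sets_\<mu> by (rule sets_eq_imp_space_eq)
  have int_pf: "integrable \<mu> (\<lambda>x. p x *\<^sub>R f x)" and int_qf: "integrable \<mu> (\<lambda>x. q x *\<^sub>R f x)"
    using f p(2) q(2) by (simp_all add: P Q integrable_density)
  have int_g: "integrable \<mu> (\<lambda>x. \<bar>p x - q x\<bar> * g x)"
  proof -
    have "integrable (tv_diff P Q) g"
      using tv_finite g(2) by (intro integrableI_nonneg) (auto simp: tv)
    then show ?thesis
      by (simp add: tv integrable_density)
  qed
  have "integral\<^sup>L P f - integral\<^sup>L Q f = (\<integral>x. (p x - q x) *\<^sub>R f x \<partial>\<mu>)"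
    using int_pf int_qf p(2) q(2) by (simp add: P Q integral_density scaleR_diff_left)
  also have "norm \<dots> \<le> (\<integral>x. norm ((p x - q x) *\<^sub>R f x) \<partial>\<mu>)"
    by (rule integral_norm_bound)
  also have "\<dots> \<le> (\<integral>x. c * (\<bar>p x - q x\<bar> * g x) \<partial>\<mu>)"
  proof (rule integral_mono)
    show "integrable \<mu> (\<lambda>x. norm ((p x - q x) *\<^sub>R f x))"
      using int_pf int_qf by (simp add: scaleR_diff_left)
    show "integrable \<mu> (\<lambda>x. c * (\<bar>p x - q x\<bar> * g x))"
      using int_g by simp
    fix x assume "x \<in> space \<mu>"
    then have "\<bar>p x - q x\<bar> * norm (f x) \<le> \<bar>p x - q x\<bar> * (c * g x)"
      using bound space_\<mu> by (intro mult_left_mono) auto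
    then show "norm ((p x - q x) *\<^sub>R f x) \<le> c * (\<bar>p x - q x\<bar> * g x)"
      by (simp add: mult_ac)
  qed
  also have "\<dots> = c * (\<integral>x. \<bar>p x - q x\<bar> * g x \<partial>\<mu>)"
    by simp
  also have "(\<integral>x. \<bar>p x - q x\<bar> * g x \<partial>\<mu>) = enn2real (\<integral>\<^sup>+x. g x \<partial>tv_diff P Q)"
    using int_g g(2) by (simp add: tv nn_integral_density integral_eq_nn_integral ennreal_mult)
  finally show ?thesis .
qed

section \<open>The reference measure\<close>

lemma Gamma_minus_one_minus_pos:
  fixes \<beta> :: real
  assumes "0 < \<beta>" "\<beta> < 1"
  shows "Gamma (-1 - \<beta>) > 0"
proof -
  have "\<beta> \<notin> \<int>"
  proof
    assume "\<beta> \<in> \<int>"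
    then obtain k :: int where "\<beta> = of_int k"
      by (elim Ints_cases)
    with assms show False
      by auto
  qed
  then have "-\<beta> \<notin> \<int>" "-1 - \<beta> \<notin> \<int>"
    using Ints_diff[of "-1" "-1 - \<beta>"] by auto
  then have "-\<beta> \<notin> \<int>\<^sub>\<le>\<^sub>0" "-1 - \<beta> \<notin> \<int>\<^sub>\<le>\<^sub>0"
    using nonpos_Ints_subset_Ints by auto
  then have "Gamma (1 - \<beta>) = -\<beta> * Gamma (-\<beta>)" "Gamma (-\<beta>) = (-1 - \<beta>) * Gamma (-1 - \<beta>)"
    using Gamma_plus1[of "-\<beta>"] Gamma_plus1[of "-1 - \<beta>"] by simp_all
  then have "Gamma (1 - \<beta>) = \<beta> * (1 + \<beta>) * Gamma (-1 - \<beta>)"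
    by (simp add: algebra_simps)
  moreover have "Gamma (1 - \<beta>) > 0" "\<beta> * (1 + \<beta>) > 0"
    using assms by auto
  ultimately show ?thesis
    by (simp add: zero_less_mult_iff)
qed

lemma integrable_indicator_times_if_has_integral:
  fixes f :: "'a::euclidean_space \<Rightarrow> real"
  assumes "(f has_integral I) \<Omega>" "\<And>x. x \<in> \<Omega> \<Longrightarrow> 0 \<le> f x"
    and "(\<lambda>x. indicator \<Omega> x * f x) \<in> borel_measurable borel"
  shows "integrable lborel (\<lambda>x. indicator \<Omega> x * f x)"
proof (rule integrableI_nonneg)
  show "(\<integral>\<^sup>+x. ennreal (indicator \<Omega> x * f x) \<partial>lborel) < \<infinity>"
    using nn_integral_has_integral_lebesgue[OF assms(2,1)] by simp
qed (use assms(2,3) in \<open>auto simp: indicator_def\<close>)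

lemma levy_measure_nu:
  assumes "0 < \<beta>" "\<beta> < 1" "\<eta> > 0"
  shows "levy_measure (nu \<eta> \<beta>)"
proof
  show "sets (nu \<eta> \<beta>) = sets borel"
    by (simp add: nu_def)
  have Gamma: "Gamma (-1 - \<beta>) > 0"
    using assms(1,2) by (rule Gamma_minus_one_minus_pos)
  define c where "c = \<eta> / Gamma (-1 - \<beta>)"
  have c: "c > 0"
    using assms Gamma by (simp add: c_def)
  define w where "w y = indicator {0<..} y * \<eta> / (Gamma (-1 - \<beta>) * y powr (2 + \<beta>))" for y :: real
  have w: "w \<in> borel_measurable borel" "\<And>y. 0 \<le> w y"
    unfolding w_def using assms Gamma by (measurable, auto simp: indicator_def)
  have w_lin_sq_min: "norm (w y * (indicator {0<..} y * lin_sq_min y))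
      \<le> c * (indicator {0..1} y * y powr (-\<beta>)) + c * (indicator {1..} y * y powr (-1 - \<beta>))" for y
  proof (cases "y > 0")
    case True
    have "lin_sq_min y = y powr (if y \<le> 1 then 2 else 1)"
      using True by (simp add: lin_sq_min_eq_sq lin_sq_min_eq_self powr_numeral)
    then have "lin_sq_min y / y powr (2 + \<beta>) = (if y \<le> 1 then y powr (-\<beta>) else y powr (-1 - \<beta>))"
      by (simp flip: powr_diff)
    moreover have "w y * lin_sq_min y = c * (lin_sq_min y / y powr (2 + \<beta>))"
      using True by (simp add: w_def c_def)
    moreover have "0 \<le> w y * lin_sq_min y"
      using True w(2)[of y] lin_sq_min_nonneg[of y] by simp
    ultimately show ?thesis
      using True c by (auto simp: indicator_def)
  qed (use c in \<open>auto simp: w_def indicator_def\<close>)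
  have "integrable lborel (\<lambda>y. w y * (indicator {0<..} y * lin_sq_min y))"
  proof (rule Bochner_Integration.integrable_bound)
    show "integrable lborel
        (\<lambda>y. c * (indicator {0..1} y * y powr (-\<beta>)) + c * (indicator {1..} y * y powr (-1 - \<beta>)))"
      using has_integral_powr_from_0[of "-\<beta>" 1] has_integral_powr_to_inf[of "-1 - \<beta>" 1] assms
      by (intro Bochner_Integration.integrable_add integrable_mult_right
          integrable_indicator_times_if_has_integral) auto
  qed (use w w_lin_sq_min in \<open>measurable, auto intro: order_trans[OF _ abs_ge_self]\<close>)
  then show "integrable (nu \<eta> \<beta>) (\<lambda>y. indicator {0<..} y * lin_sq_min y)"
    unfolding nu_def using w by (subst integrable_density) (auto simp: w_def)
qed

section \<open>The extension of psi_1\<close>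

lemma norm_large_jumps_diff_le:
  assumes M: "levy_measure M" and N: "levy_measure N" and z: "Re z \<ge> 0"
    and s: "1 \<le> s" "s \<le> 2" "s \<le> e"
    and tv_finite: "(\<integral>\<^sup>+y. ennreal (y powr e)
      \<partial>tv_diff (restrict_space M {1<..}) (restrict_space N {1<..})) < \<infinity>"
  shows "norm (integral\<^sup>L (restrict_space M {1<..}) (\<lambda>y. levy_kernel y z)
      - integral\<^sup>L (restrict_space N {1<..}) (\<lambda>y. levy_kernel y z))
    \<le> 2 * norm z powr s * enn2real (\<integral>\<^sup>+y. ennreal (y powr e)
      \<partial>tv_diff (restrict_space M {1<..}) (restrict_space N {1<..}))"
proof (rule norm_integral_diff_le_tv_diff)
  interpret M: levy_measure M by (rule M)
  interpret N: levy_measure N by (rule N)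
  show "finite_measure (restrict_space M {1<..})" "finite_measure (restrict_space N {1<..})"
    by (rule M.finite_measure_large_jumps N.finite_measure_large_jumps)+
  show "sets (restrict_space N {1<..}) = sets (restrict_space M {1<..})"
    by (simp add: M.sets_eq N.sets_eq sets_restrict_space)
  show "integrable (restrict_space M {1<..}) (\<lambda>y. levy_kernel y z)"
    "integrable (restrict_space N {1<..}) (\<lambda>y. levy_kernel y z)"
    using z by (rule M.levy_integral_split(2) N.levy_integral_split(2))+
  show "(\<lambda>y. y powr e) \<in> borel_measurable (restrict_space M {1<..})"
    by (intro measurable_restrict_space1) (simp add: M.sets_eq cong: measurable_cong_sets)
  fix y assume "y \<in> space (restrict_space M {1<..})"
  then have "y > 1"
    by (simp add: space_restrict_space M.space_eq)
  then show "norm (levy_kernel y z) \<le> 2 * norm z powr s * y powr e"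
    using z s by (intro norm_levy_kernel_le_powr) auto
qed (use tv_finite in auto)

definition psi1_extension :: "real \<Rightarrow> real measure \<Rightarrow> real measure \<Rightarrow> complex \<Rightarrow> complex" where
  "psi1_extension \<rho> M N z = of_real \<rho> * z\<^sup>2 + (levy_integral M z - levy_integral N z)"

lemma psi1_extension_growth:
  assumes M: "levy_measure M" and N: "levy_measure N" and "\<rho> \<ge> 0"
    and s: "1 \<le> s" "s \<le> 2" "s \<le> e"
    and tv_finite: "(\<integral>\<^sup>+y. ennreal (y powr e)
      \<partial>tv_diff (restrict_space M {1<..}) (restrict_space N {1<..})) < \<infinity>"
  shows "\<exists>C>0. \<forall>z. Re z \<ge> 0 \<longrightarrow> norm (psi1_extension \<rho> M N z) \<le> C * norm z powr s + C * norm z ^ 2"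
proof -
  interpret M: levy_measure M by (rule M)
  interpret N: levy_measure N by (rule N)
  define I where "I L = (LINT y|L. indicator {0<..} y * lin_sq_min y)" for L
  define K where "K = enn2real (\<integral>\<^sup>+y. ennreal (y powr e)
      \<partial>tv_diff (restrict_space M {1<..}) (restrict_space N {1<..}))"
  have "K \<ge> 0"
    by (simp add: K_def)
  define C where "C = \<rho> + \<bar>I M\<bar> + \<bar>I N\<bar> + 2 * K + 1"
  have "norm (psi1_extension \<rho> M N z) \<le> C * norm z powr s + C * norm z ^ 2" if z: "Re z \<ge> 0" for z
  proof -
    let ?small = "\<lambda>L. LINT y:{0<..1}|L. levy_kernel y z"
    let ?large = "\<lambda>L. integral\<^sup>L (restrict_space L {1<..}) (\<lambda>y. levy_kernel y z)"
    have "psi1_extension \<rho> M N z = of_real \<rho> * z\<^sup>2 + (?small M - ?small N) + (?large M - ?large N)"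
      using M.levy_integral_split(1)[OF z] N.levy_integral_split(1)[OF z]
      by (simp add: psi1_extension_def)
    moreover note norm_triangle_ineq4[of "?small M" "?small N"]
      M.norm_small_jumps_le[OF z] N.norm_small_jumps_le[OF z]
      norm_large_jumps_diff_le[OF M N z s tv_finite]
    ultimately have "norm (psi1_extension \<rho> M N z)
        \<le> \<rho> * norm z ^ 2 + norm z ^ 2 * I M + norm z ^ 2 * I N + 2 * norm z powr s * K"
      unfolding I_def K_def using \<open>\<rho> \<ge> 0\<close>
      by (smt (verit) norm_triangle_ineq norm_mult norm_of_real norm_power)
    also have "\<dots> = (2 * K) * norm z powr s + (\<rho> + I M + I N) * norm z ^ 2"
      by (simp add: algebra_simps)
    also have "\<dots> \<le> C * norm z powr s + C * norm z ^ 2"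
      using abs_ge_self[of "I M"] abs_ge_self[of "I N"] \<open>\<rho> \<ge> 0\<close> \<open>K \<ge> 0\<close>
      by (intro add_mono mult_right_mono) (auto simp: C_def)
    finally show ?thesis .
  qed
  moreover have "C > 0"
    using \<open>\<rho> \<ge> 0\<close> \<open>K \<ge> 0\<close> by (simp add: C_def add_pos_nonneg)
  ultimately show ?thesis
    by blast
qed

lemma halfplane_extension_unique:
  fixes g h :: "complex \<Rightarrow> complex"
  assumes "continuous_on {z. Re z \<ge> 0} g" "g holomorphic_on {z. Re z > 0}"
    and "continuous_on {z. Re z \<ge> 0} h" "h holomorphic_on {z. Re z > 0}"
    and eq: "\<And>x. x > 0 \<Longrightarrow> g (of_real x) = h (of_real x)" and z: "Re z \<ge> 0"
  shows "g z = h z"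
proof -
  have limpt: "1 islimpt (complex_of_real ` {0<..})"
    unfolding islimpt_approachable
  proof (intro allI impI)
    fix e :: real assume "e > 0"
    then show "\<exists>x'\<in>complex_of_real ` {0<..}. x' \<noteq> 1 \<and> dist x' 1 < e"
      by (intro bexI[of _ "of_real (1 + e/2)"]) (auto simp: dist_norm intro!: image_eqI[of _ _ "1 + e/2"])
  qed
  have "g w - h w = 0" if "Re w > 0" for w
    by (rule analytic_continuation[of _ "{z. Re z > 0}" "complex_of_real ` {0<..}" 1])
      (use assms(1-5) that limpt in \<open>auto intro!: holomorphic_intros
        simp: open_halfspace_Re_gt convex_connected convex_halfspace_Re_gt\<close>)
  then have "{z. Re z > 0} \<subseteq> {z \<in> {z. Re z \<ge> 0}. g z - h z = 0}"
    by auto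
  moreover have "closed {z \<in> {z. Re z \<ge> 0}. g z - h z = 0}"
    using assms by (intro continuous_closed_preimage_constant continuous_intros closed_halfspace_Re_ge)
  ultimately have "closure {z. Re z > 0} \<subseteq> {z \<in> {z. Re z \<ge> 0}. g z - h z = 0}"
    by (rule closure_minimal)
  moreover have "closure {z. Re z > 0} = {z. Re z \<ge> 0}"
    using closure_halfspace_gt[of "1::complex" 0] by (simp add: inner_complex_def)
  ultimately show ?thesis
    using z by auto
qed

theorem lemma2p1:
  fixes \<rho> \<eta> \<beta> \<delta> :: real and \<pi> :: "real measure"
  assumes "\<rho> \<ge> 0"
    and "sets \<pi> = sets borel"
    and "emeasure \<pi> {..0} = 0"
    and "(\<integral>\<^sup>+y\<in>{0<..}. ennreal (min y (y^2)) \<partial>\<pi>) < \<infinity>"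
    and "\<eta> > 0" and "0 < \<beta>" and "\<beta> < 1" and "\<delta> > 0"
    and "(\<integral>\<^sup>+y. ennreal (y powr (1 + \<beta> + \<delta>))
            \<partial>tv_diff (restrict_space \<pi> {1<..}) (restrict_space (nu \<eta> \<beta>) {1<..})) < \<infinity>"
  shows "\<exists>g. continuous_on {z. Re z \<ge> 0} g
            \<and> g holomorphic_on {z. Re z > 0}
            \<and> (\<forall>x\<ge>0. g (complex_of_real x) = complex_of_real (psi1 \<rho> \<pi> \<eta> \<beta> x))
            \<and> (\<forall>h. continuous_on {z. Re z \<ge> 0} h \<and> h holomorphic_on {z. Re z > 0}
                   \<and> (\<forall>x\<ge>0. h (complex_of_real x) = complex_of_real (psi1 \<rho> \<pi> \<eta> \<beta> x))
                   \<longrightarrow> (\<forall>z. Re z \<ge> 0 \<longrightarrow> h z = g z))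
            \<and> (\<exists>\<delta>0>0. \<forall>d. 0 < d \<and> d < \<delta>0 \<longrightarrow>
                 (\<exists>C>0. \<forall>z. Re z \<ge> 0 \<longrightarrow>
                    cmod (g z) \<le> C * cmod z powr (1 + \<beta> + d) + C * cmod z ^ 2))"
proof -
  interpret \<pi>: levy_measure \<pi>
    using assms(2,4) by (rule levy_measureI)
  interpret \<nu>: levy_measure "nu \<eta> \<beta>"
    using assms(5-7) by (intro levy_measure_nu)
  define g where "g = psi1_extension \<rho> \<pi> (nu \<eta> \<beta>)"
  have cont: "continuous_on {z. Re z \<ge> 0} g"
    unfolding g_def psi1_extension_def
    by (intro continuous_intros \<pi>.continuous_on_levy_integral \<nu>.continuous_on_levy_integral)
  have holo: "g holomorphic_on {z. Re z > 0}"
    unfolding g_def psi1_extension_def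
    by (intro holomorphic_intros \<pi>.holomorphic_on_levy_integral \<nu>.holomorphic_on_levy_integral)
  have real: "\<forall>x\<ge>0. g (of_real x) = of_real (psi1 \<rho> \<pi> \<eta> \<beta> x)"
    by (simp add: g_def psi1_extension_def psi1_def levy_integral_of_real)
  have unique: "h z = g z"
    if "continuous_on {z. Re z \<ge> 0} h" "h holomorphic_on {z. Re z > 0}"
      and "\<forall>x\<ge>0. h (of_real x) = of_real (psi1 \<rho> \<pi> \<eta> \<beta> x)" and "Re z \<ge> 0" for h z
  proof (rule halfplane_extension_unique[OF that(1,2) cont holo _ that(4)])
    fix x :: real assume "x > 0"
    then show "h (of_real x) = g (of_real x)"
      using that(3) real by simp
  qed
  have growth: "\<exists>C>0. \<forall>z. Re z \<ge> 0 \<longrightarrow> norm (g z) \<le> C * norm z powr (1 + \<beta> + d) + C * norm z ^ 2"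
    if "0 < d" "d < min \<delta> (1 - \<beta>)" for d
    unfolding g_def using that assms(6)
    by (intro psi1_extension_growth[OF \<pi>.levy_measure_axioms \<nu>.levy_measure_axioms assms(1) _ _ _ assms(9)])
      auto
  have "min \<delta> (1 - \<beta>) > 0"
    using assms(7,8) by simp
  with cont holo real unique growth show ?thesis
    by blast
qed

end
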